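(* Let $n$ be a positive integer and let $\mathcal{B}$ be a balanced bipartite graph on $2n$ vertices with parts $V_1$ and $V_2$. If $\delta(\mathcal{B})\geq \frac{n}{2}+1$, then $f(\mathcal{B})=n+1$.
   Context: All graphs are finite and simple. A balanced bipartite graph on $2n$ vertices is a bipartite graph with a given bipartition $(V_1,V_2)$ where $|V_1|=|V_2|=n$ (every edge joins a vertex of $V_1$ to a vertex of $V_2$). $\delta(G)$ denotes the minimum degree of $G$. For $S\subseteq V(G)$, $G[S]$ denotes the induced subgraph on $S$. The forest number $f(G)$ is the maximum cardinality of a subset $S\subseteq V(G)$ such that $G[S]$ is a forest (acyclic). *)

theory Defs
  imports Main
begin

definition simple_graph :: "'a set \<Rightarrow> ('a \<Rightarrow> 'a \<Rightarrow> bool) \<Rightarrow> bool" where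
  "simple_graph V E \<longleftrightarrow> finite V \<and> (\<forall>x y. E x y \<longrightarrow> E y x) \<and> (\<forall>x. \<not> E x x)
     \<and> (\<forall>x y. E x y \<longrightarrow> x \<in> V \<and> y \<in> V)"

definition balanced_bipartite ::
  "nat \<Rightarrow> 'a set \<Rightarrow> 'a set \<Rightarrow> ('a \<Rightarrow> 'a \<Rightarrow> bool) \<Rightarrow> bool" where
  "balanced_bipartite n V1 V2 E \<longleftrightarrow> simple_graph (V1 \<union> V2) E \<and> V1 \<inter> V2 = {}
     \<and> card V1 = n \<and> card V2 = n
     \<and> (\<forall>x y. E x y \<longrightarrow> (x \<in> V1 \<and> y \<in> V2) \<or> (x \<in> V2 \<and> y \<in> V1))"

definition degree :: "'a set \<Rightarrow> ('a \<Rightarrow> 'a \<Rightarrow> bool) \<Rightarrow> 'a \<Rightarrow> nat" where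
  "degree V E v = card {u \<in> V. E v u}"

definition min_degree :: "'a set \<Rightarrow> ('a \<Rightarrow> 'a \<Rightarrow> bool) \<Rightarrow> nat" where
  "min_degree V E = Min (degree V E ` V)"

definition is_cycle :: "'a set \<Rightarrow> ('a \<Rightarrow> 'a \<Rightarrow> bool) \<Rightarrow> 'a list \<Rightarrow> bool" where
  "is_cycle V E cs \<longleftrightarrow> length cs \<ge> 3 \<and> distinct cs \<and> set cs \<subseteq> V
     \<and> (\<forall>i < length cs - 1. E (cs ! i) (cs ! Suc i)) \<and> E (last cs) (hd cs)"

text \<open>The induced subgraph G[S] is a forest iff it contains no cycle; cycles of
  G[S] are exactly the cycles of G whose vertices lie in S.\<close>
definition induces_forest :: "'a set \<Rightarrow> ('a \<Rightarrow> 'a \<Rightarrow> bool) \<Rightarrow> 'a set \<Rightarrow> bool" where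
  "induces_forest V E S \<longleftrightarrow> S \<subseteq> V \<and> \<not> (\<exists>cs. is_cycle S E cs)"

definition forest_number :: "'a set \<Rightarrow> ('a \<Rightarrow> 'a \<Rightarrow> bool) \<Rightarrow> nat" where
  "forest_number V E = Max (card ` {S. induces_forest V E S})"

end

(*
  Let S induce a forest and put A = S \<inter> V1, B = S \<inter> V2. The forest has at most
  |A| + |B| - 1 edges, all between A and B. A vertex of A misses at most n - |B| vertices
  of V2, so the degree bound gives it at least (n + 2)/2 - (n - |B|) neighbours in B.
  If |A| + |B| \<ge> n + 2 and |A| \<le> |B|, summing over A yields at least |A| + |B| edges,
  a contradiction. Conversely V1 together with one vertex of V2 induces a star, which is
  a forest on n + 1 vertices.
*)
theory Submission
  imports Defs
begin

definition is_path :: "'a set \<Rightarrow> ('a \<Rightarrow> 'a \<Rightarrow> bool) \<Rightarrow> 'a list \<Rightarrow> bool" where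
  "is_path S E p \<longleftrightarrow> p \<noteq> [] \<and> distinct p \<and> set p \<subseteq> S
     \<and> (\<forall>i < length p - 1. E (p ! i) (p ! Suc i))"

lemma is_path_Cons:
  assumes "is_path S E p" "u \<in> S" "u \<notin> set p" "E u (hd p)"
  shows "is_path S E (u # p)"
  unfolding is_path_def
proof (intro conjI allI impI)
  fix i assume i: "i < length (u # p) - 1"
  show "E ((u # p) ! i) ((u # p) ! Suc i)"
  proof (cases i)
    case 0
    then show ?thesis using assms(1,4) by (simp add: is_path_def hd_conv_nth)
  next
    case (Suc j)
    then show ?thesis using assms(1) i by (simp add: is_path_def)
  qed
qed (use assms in \<open>auto simp: is_path_def\<close>)

lemma ex_longest_path:
  assumes "finite S" "s \<in> S"
  shows "\<exists>p. is_path S E p \<and> (\<forall>q. is_path S E q \<longrightarrow> length q \<le> length p)"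
proof (rule ex_has_greatest_nat[of "is_path S E" "[s]" length "card S + 1"])
  show "is_path S E [s]" using assms(2) by (simp add: is_path_def)
  show "\<forall>q. is_path S E q \<longrightarrow> length q < card S + 1"
  proof (intro allI impI)
    fix q assume "is_path S E q"
    then have "distinct q" "set q \<subseteq> S" by (auto simp: is_path_def)
    then have "length q \<le> card S"
      using card_mono[OF assms(1)] distinct_card by metis
    then show "length q < card S + 1" by simp
  qed
qed

lemma is_cycle_take_path:
  assumes p: "is_path S E p" and J: "2 \<le> J" "J < length p" and "E (p ! J) (p ! 0)"
  shows "is_cycle S E (take (Suc J) p)"
  unfolding is_cycle_def
proof (intro conjI allI impI)
  show "set (take (Suc J) p) \<subseteq> S" using p set_take_subset by (fastforce simp: is_path_def)
  have "last (take (Suc J) p) = p ! J" "hd (take (Suc J) p) = p ! 0"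
    using J by (simp add: take_Suc_conv_app_nth, cases p, auto)
  then show "E (last (take (Suc J) p)) (hd (take (Suc J) p))" using assms(4) by simp
qed (use p J in \<open>auto simp: is_path_def\<close>)

lemma ex_cycle_if_two_neighbours:
  assumes "finite S" "S \<noteq> {}" "symp E" "irreflp E"
    and two: "\<forall>v\<in>S. \<exists>u w. u \<in> S \<and> w \<in> S \<and> u \<noteq> w \<and> E v u \<and> E v w"
  shows "\<exists>cs. is_cycle S E cs"
proof -
  obtain p where p: "is_path S E p" and longest: "\<forall>q. is_path S E q \<longrightarrow> length q \<le> length p"
    using ex_longest_path[OF assms(1)] assms(2) by blast
  have hd_p: "hd p = p ! 0" and hd_S: "hd p \<in> S"
    using p by (auto simp: is_path_def hd_conv_nth)
  \<comment> \<open>a longest path cannot be extended, so all neighbours of its head lie on it\<close>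
  have on_path: "u \<in> set p" if "u \<in> S" "E (hd p) u" for u
  proof (rule ccontr)
    assume "u \<notin> set p"
    then have "is_path S E (u # p)"
      using is_path_Cons p that assms(3) by (metis sympD)
    then show False using longest by fastforce
  qed
  obtain u w where uw: "u \<in> S" "w \<in> S" "u \<noteq> w" "E (hd p) u" "E (hd p) w"
    using two hd_S by blast
  obtain j k where jk: "j < length p" "p ! j = u" "k < length p" "p ! k = w"
    using on_path uw by (meson in_set_conv_nth)
  have "j \<noteq> 0" "k \<noteq> 0" "j \<noteq> k"
    using jk uw hd_p irreflpD[OF assms(4)] by metis+
  then have "2 \<le> j \<or> 2 \<le> k" by linarith
  moreover have "E (p ! j) (p ! 0)" "E (p ! k) (p ! 0)"
    using jk uw hd_p sympD[OF assms(3)] by simp_all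
  ultimately obtain J where "2 \<le> J" "J < length p" "E (p ! J) (p ! 0)"
    using jk by blast
  then show ?thesis using is_cycle_take_path[OF p] by blast
qed

lemma is_cycle_mono: "is_cycle S E cs \<Longrightarrow> S \<subseteq> T \<Longrightarrow> is_cycle T E cs"
  unfolding is_cycle_def by blast

lemma is_cycle_edge_avoiding:
  assumes "is_cycle S E cs"
  shows "\<exists>x y. x \<in> set cs \<and> y \<in> set cs \<and> x \<noteq> v \<and> y \<noteq> v \<and> E x y"
proof -
  have len: "3 \<le> length cs" and d: "distinct cs"
    and step: "\<forall>i < length cs - 1. E (cs ! i) (cs ! Suc i)" and close: "E (last cs) (hd cs)"
    using assms by (auto simp: is_cycle_def)
  have ne: "cs \<noteq> []" using len by auto
  have neq: "cs ! i \<noteq> cs ! j" if "i < length cs" "j < length cs" "i \<noteq> j" for i j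
    using d that by (simp add: nth_eq_iff_index_eq)
  have e01: "E (cs ! 0) (cs ! 1)" and e12: "E (cs ! 1) (cs ! 2)"
    using step len by (auto simp: numeral_eq_Suc)
  have in_cs: "cs ! 0 \<in> set cs" "cs ! 1 \<in> set cs" "cs ! 2 \<in> set cs"
    using len nth_mem[of 0 cs] nth_mem[of 1 cs] nth_mem[of 2 cs] by linarith+
  consider "v \<noteq> cs ! 0" "v \<noteq> cs ! 1" | "v = cs ! 0" | "v = cs ! 1" by blast
  then show ?thesis
  proof cases
    case 1
    then show ?thesis using e01 in_cs by blast
  next
    case 2
    moreover have "cs ! 1 \<noteq> cs ! 0" "cs ! 2 \<noteq> cs ! 0"
      using len ne neq[of 1 0] neq[of 2 0] by simp_all
    ultimately show ?thesis using e12 in_cs by blast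
  next
    case 3
    have "last cs = cs ! (length cs - 1)" using ne by (rule last_conv_nth)
    moreover have "cs ! (length cs - 1) \<noteq> cs ! 1" using len ne neq[of "length cs - 1" 1] by simp
    moreover have "hd cs = cs ! 0" using ne by (rule hd_conv_nth)
    moreover have "cs ! 0 \<noteq> cs ! 1" using len ne neq[of 0 1] by simp
    moreover have "last cs \<in> set cs" "hd cs \<in> set cs" using ne by simp_all
    ultimately show ?thesis using 3 close by auto
  qed
qed

lemma induces_forest_insert_independent:
  assumes "S \<subseteq> V" "v \<in> V" "\<forall>x\<in>S. \<forall>y\<in>S. \<not> E x y"
  shows "induces_forest V E (insert v S)"
  unfolding induces_forest_def
proof (intro conjI notI)
  show "insert v S \<subseteq> V" using assms(1,2) by simp
  assume "\<exists>cs. is_cycle (insert v S) E cs"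
  then obtain cs where cs: "is_cycle (insert v S) E cs" by blast
  then have "set cs \<subseteq> insert v S" by (simp add: is_cycle_def)
  then show False using is_cycle_edge_avoiding[OF cs, of v] assms(3) by blast
qed

definition arcs :: "'a set \<Rightarrow> 'a set \<Rightarrow> ('a \<Rightarrow> 'a \<Rightarrow> bool) \<Rightarrow> ('a \<times> 'a) set" where
  "arcs A B E = {(x, y). x \<in> A \<and> y \<in> B \<and> E x y}"

lemma arcs_eq_Sigma: "arcs A B E = Sigma A (\<lambda>x. {y \<in> B. E x y})"
  by (auto simp: arcs_def)

lemma finite_arcs [simp]: "finite A \<Longrightarrow> finite B \<Longrightarrow> finite (arcs A B E)"
  by (simp add: arcs_eq_Sigma)

lemma card_arcs_eq_sum:
  "finite A \<Longrightarrow> finite B \<Longrightarrow> card (arcs A B E) = (\<Sum>x\<in>A. card {y \<in> B. E x y})"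
  by (simp add: arcs_eq_Sigma)

lemma card_arcs_commute: "symp E \<Longrightarrow> card (arcs B A E) = card (arcs A B E)"
proof -
  assume "symp E"
  then have "arcs B A E = prod.swap ` arcs A B E"
    by (force simp: arcs_def dest: sympD)
  then show ?thesis by (simp add: card_image)
qed

text \<open>Arcs count every edge twice, so this says that a forest on s vertices has at most
  s - 1 edges.\<close>
lemma card_arcs_acyclic:
  assumes "finite S" "symp E" "irreflp E" "\<nexists>cs. is_cycle S E cs"
  shows "card (arcs S S E) \<le> 2 * card S - 2"
  using assms(1,4)
proof (induction S rule: finite_remove_induct)
  case empty
  then show ?case by (simp add: arcs_def)
next
  case (remove A)
  obtain v where v: "v \<in> A"
    and leaf: "\<not> (\<exists>u w. u \<in> A \<and> w \<in> A \<and> u \<noteq> w \<and> E v u \<and> E v w)"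
    using ex_cycle_if_two_neighbours[OF remove(1,2) assms(2,3)] remove(5) by blast
  then obtain u where u: "\<forall>y\<in>A. E v y \<longrightarrow> y = u" by blast
  then have u': "\<forall>y\<in>A. E y v \<longrightarrow> y = u" using sympD[OF assms(2)] by blast
  let ?A' = "A - {v}"
  have IH: "card (arcs ?A' ?A' E) \<le> 2 * card ?A' - 2"
    using remove.IH[OF v] remove(5) is_cycle_mono[of ?A' E _ A] by blast
  have "arcs A A E \<subseteq> insert (v, u) (insert (u, v) (arcs ?A' ?A' E))"
    using u u' by (auto simp: arcs_def)
  then have "card (arcs A A E) \<le> card (insert (v, u) (insert (u, v) (arcs ?A' ?A' E)))"
    by (rule card_mono[rotated]) (simp add: remove(1))
  also have "\<dots> \<le> card (arcs ?A' ?A' E) + 2"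
    by (intro card_insert_le_m1) (simp_all add: card_insert_le_m1)
  finally have step: "card (arcs A A E) \<le> card (arcs ?A' ?A' E) + 2" .
  show ?case
  proof (cases "A = {v}")
    case True
    then have "arcs A A E = {}" using irreflpD[OF assms(3)] by (auto simp: arcs_def)
    then show ?thesis by simp
  next
    case False
    then have "?A' \<noteq> {}" using v by blast
    then have "card ?A' \<ge> 1" using remove(1) by (simp add: Suc_le_eq card_gt_0_iff)
    moreover have "card A = card ?A' + 1" using card_Suc_Diff1[OF remove(1) v] by simp
    ultimately show ?thesis using step IH by linarith
  qed
qed

lemma forest_number_eqI:
  assumes "finite V" "\<And>S. induces_forest V E S \<Longrightarrow> card S \<le> k"
    and "induces_forest V E S\<^sub>0" "card S\<^sub>0 = k"
  shows "forest_number V E = k"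
  unfolding forest_number_def
proof (rule Max_eqI)
  have "{S. induces_forest V E S} \<subseteq> Pow V" by (auto simp: induces_forest_def)
  then have "finite {S. induces_forest V E S}"
    by (rule finite_subset) (simp add: assms(1))
  then show "finite (card ` {S. induces_forest V E S})" by simp
next
  show "\<And>x. x \<in> card ` {S. induces_forest V E S} \<Longrightarrow> x \<le> k" using assms(2) by blast
  show "k \<in> card ` {S. induces_forest V E S}" using assms(3,4) by blast
qed

lemma degree_ge_min_degree: "finite V \<Longrightarrow> v \<in> V \<Longrightarrow> min_degree V E \<le> degree V E v"
  unfolding min_degree_def by simp

lemma balanced_bipartite_commute:
  "balanced_bipartite n V1 V2 E \<Longrightarrow> balanced_bipartite n V2 V1 E"
  unfolding balanced_bipartite_def by (auto simp: Un_commute Int_commute)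

lemma card_arcs_min_degree:
  assumes bb: "balanced_bipartite n V1 V2 E"
    and deg: "\<forall>x\<in>V1. n + 2 \<le> 2 * degree (V1 \<union> V2) E x"
    and A: "A \<subseteq> V1" and B: "B \<subseteq> V2"
  shows "card A * (n + 2) \<le> 2 * card (arcs A B E) + 2 * card A * (n - card B)"
proof -
  have fin: "finite V1" "finite V2" and disj: "V1 \<inter> V2 = {}" and n: "card V2 = n"
    and bip: "\<forall>x y. E x y \<longrightarrow> (x \<in> V1 \<and> y \<in> V2) \<or> (x \<in> V2 \<and> y \<in> V1)"
    using bb by (auto simp: balanced_bipartite_def simple_graph_def)
  have finAB: "finite A" "finite B" using A B fin finite_subset by auto
  have "n + 2 \<le> 2 * card {y \<in> B. E x y} + 2 * (n - card B)" if x: "x \<in> A" for x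
  proof -
    have "{u \<in> V1 \<union> V2. E x u} \<subseteq> {y \<in> B. E x y} \<union> (V2 - B)"
      using x A bip disj by blast
    then have "degree (V1 \<union> V2) E x \<le> card ({y \<in> B. E x y} \<union> (V2 - B))"
      unfolding degree_def using fin finAB by (intro card_mono) auto
    also have "\<dots> \<le> card {y \<in> B. E x y} + card (V2 - B)" by (rule card_Un_le)
    also have "card (V2 - B) = n - card B" using n B fin by (simp add: card_Diff_subset finite_subset)
    finally show ?thesis using deg x A by fastforce
  qed
  then have "(\<Sum>x\<in>A. n + 2) \<le> (\<Sum>x\<in>A. 2 * card {y \<in> B. E x y} + 2 * (n - card B))"
    by (rule sum_mono)
  then show ?thesis
    using finAB by (simp add: card_arcs_eq_sum sum.distrib sum_distrib_left mult_ac)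
qed

lemma degree_count_bound:
  fixes a b n m :: nat
  assumes "n + 2 \<le> a + b" "a \<le> b" "b \<le> n" "a * (n + 2) \<le> 2 * m + 2 * a * (n - b)"
  shows "a + b \<le> m"
proof -
  have count: "int a * (2 * int b - int n + 2) \<le> 2 * int m"
  proof -
    have "int (a * (n + 2)) \<le> int (2 * m + 2 * a * (n - b))"
      using assms(4) by (simp only: of_nat_le_iff)
    then have "int a * (int n + 2) \<le> 2 * int m + 2 * int a * int (n - b)"
      by (simp only: of_nat_add of_nat_mult of_nat_numeral)
    then show ?thesis using assms(3) by (simp add: of_nat_diff algebra_simps)
  qed
  have "int a * (int b - int a + 4) \<le> int a * (2 * int b - int n + 2)"
    by (rule mult_left_mono) (use assms(1) in linarith)+
  moreover have "0 \<le> (int a - 2) * (int b - int a)"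
    using assms(1-3) by (intro mult_nonneg_nonneg) linarith+
  moreover have "int a * (int b - int a + 4) = (int a - 2) * (int b - int a) + 2 * (int a + int b)"
    by (simp add: algebra_simps)
  ultimately have "2 * (int a + int b) \<le> 2 * int m"
    using count by linarith
  then show ?thesis by simp
qed

lemma card_induced_forest_le:
  assumes bb: "balanced_bipartite n V1 V2 E"
    and deg: "\<forall>x\<in>V1 \<union> V2. n + 2 \<le> 2 * degree (V1 \<union> V2) E x"
    and forest: "induces_forest (V1 \<union> V2) E S"
  shows "card S \<le> n + 1"
proof (rule ccontr)
  assume "\<not> card S \<le> n + 1"
  then have big: "n + 2 \<le> card S" by simp
  have fin: "finite V1" "finite V2" and disj: "V1 \<inter> V2 = {}"
    and n: "card V1 = n" "card V2 = n" and "symp E" "irreflp E"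
    and bip: "\<forall>x y. E x y \<longrightarrow> (x \<in> V1 \<and> y \<in> V2) \<or> (x \<in> V2 \<and> y \<in> V1)"
    using bb by (auto simp: balanced_bipartite_def simple_graph_def symp_def irreflp_def)
  have SV: "S \<subseteq> V1 \<union> V2" and acyclic: "\<nexists>cs. is_cycle S E cs"
    using forest by (auto simp: induces_forest_def)
  define A where "A = S \<inter> V1"
  define B where "B = S \<inter> V2"
  define m where "m = card (arcs A B E)"
  have finS: "finite S" using SV fin finite_subset by blast
  have A: "A \<subseteq> V1" "finite A" and B: "B \<subseteq> V2" "finite B"
    using finS by (auto simp: A_def B_def)
  have "S = A \<union> B" "A \<inter> B = {}" using SV disj by (auto simp: A_def B_def)
  then have card_S: "card S = card A + card B" using A B by (simp add: card_Un_disjoint)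
  have "arcs S S E = arcs A B E \<union> arcs B A E" "arcs A B E \<inter> arcs B A E = {}"
    using bip disj by (auto simp: arcs_def A_def B_def)
  then have "card (arcs S S E) = 2 * m"
    using A B card_arcs_commute[OF \<open>symp E\<close>] by (simp add: card_Un_disjoint m_def)
  then have sparse: "m < card A + card B"
    using card_arcs_acyclic[OF finS \<open>symp E\<close> \<open>irreflp E\<close> acyclic] card_S big by linarith
  have "card A \<le> n" "card B \<le> n"
    using A B fin n by (metis card_mono)+
  moreover have "card A * (n + 2) \<le> 2 * m + 2 * card A * (n - card B)"
    using card_arcs_min_degree[OF bb _ A(1) B(1)] deg by (simp add: m_def)
  moreover have "card B * (n + 2) \<le> 2 * m + 2 * card B * (n - card A)"
    using card_arcs_min_degree[OF balanced_bipartite_commute[OF bb] _ B(1) A(1)] deg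
      card_arcs_commute[OF \<open>symp E\<close>] by (simp add: m_def Un_commute)
  ultimately show False
    using degree_count_bound[of n "card A" "card B" m] degree_count_bound[of n "card B" "card A" m]
      sparse card_S big by linarith
qed

lemma ex_induced_forest_card:
  assumes bb: "balanced_bipartite n V1 V2 E" and "0 < n"
  shows "\<exists>S. induces_forest (V1 \<union> V2) E S \<and> card S = n + 1"
proof -
  have fin: "finite V1" and disj: "V1 \<inter> V2 = {}" and n: "card V1 = n" "card V2 = n"
    and bip: "\<forall>x y. E x y \<longrightarrow> (x \<in> V1 \<and> y \<in> V2) \<or> (x \<in> V2 \<and> y \<in> V1)"
    using bb by (auto simp: balanced_bipartite_def simple_graph_def)
  have "V2 \<noteq> {}" using n \<open>0 < n\<close> by auto
  then obtain v where v: "v \<in> V2" by blast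
  have "v \<notin> V1" using v disj by blast
  with fin n have "card (insert v V1) = n + 1" by simp
  moreover have "induces_forest (V1 \<union> V2) E (insert v V1)"
    using v bip disj by (intro induces_forest_insert_independent) auto
  ultimately show ?thesis by blast
qed

theorem theorem1:
  fixes n :: nat and V1 V2 :: "'a set" and E :: "'a \<Rightarrow> 'a \<Rightarrow> bool"
  assumes "n > 0"
    and "balanced_bipartite n V1 V2 E"
    and "2 * min_degree (V1 \<union> V2) E \<ge> n + 2"
  shows "forest_number (V1 \<union> V2) E = n + 1"
proof -
  have fin: "finite (V1 \<union> V2)"
    using assms(2) by (simp add: balanced_bipartite_def simple_graph_def)
  then have deg: "\<forall>x\<in>V1 \<union> V2. n + 2 \<le> 2 * degree (V1 \<union> V2) E x"
    using degree_ge_min_degree assms(3) by (meson le_trans mult_le_mono2)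
  obtain S where "induces_forest (V1 \<union> V2) E S" "card S = n + 1"
    using ex_induced_forest_card[OF assms(2,1)] by blast
  then show ?thesis
    using forest_number_eqI[OF fin card_induced_forest_le[OF assms(2) deg]] by blast
qed

end
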